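(* (Propagation of the weak energy condition.) Assume (A1)–(A5). Let $(\varrho,n,\Pi,u)$ be a smooth admissible solution of the Müller–Israel–Stewart equations on $[0,T_0)\times\mathbb{R}^3$ whose initial data satisfy $\mathring\varrho+p(\mathring\varrho,\mathring n)+\mathring\Pi\ge0$ for all $x\in\mathbb{R}^3$. Then $\varrho+p(\varrho,n)+\Pi\ge0$ for all $(t,x)\in[0,T_0)\times\mathbb{R}^3$.
   Context: Minkowski space $\mathbb{R}^{1+3}$, metric $g=\mathrm{diag}(-1,1,1,1)$, coordinates $(t,x)$, summation convention. Müller–Israel–Stewart equations for $\varrho,n,\Pi$ and future-directed unit timelike $u$: $u^\alpha\partial_\alpha\varrho+(\varrho+p+\Pi)\partial_\alpha u^\alpha=0$, $(\varrho+p+\Pi)u^\beta\partial_\beta u_\alpha+(g_\alpha^\beta+u_\alpha u^\beta)\partial_\beta(p+\Pi)=0$, $u^\alpha\partial_\alpha n+n\partial_\alpha u^\alpha=0$, $\tau_0u^\alpha\partial_\alpha\Pi+\Pi+\lambda\Pi^2+\zeta\partial_\alpha u^\alpha=0$, with given $p,\zeta,\tau_0,\lambda$ functions of $(\varrho,n)$; initial data $(\mathring\varrho,\mathring n,\mathring\Pi,\mathring{\mathbf u})$. $c_s^2=\frac{\zeta}{\tau_0(\varrho+p+\Pi)}+\partial_\varrho p+\frac{n\partial_np}{\varrho+p+\Pi}$; $\mathcal P=\{\varrho>0,n>0,0<c_s^2<1\}$; admissible means values $(\varrho,n,\Pi)\in\mathcal P$. Assumptions: (A1) $p,\zeta,\tau_0$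 smooth on $\mathbb{R}^+\times\mathbb{R}^+$ with smooth extensions to $\mathbb{R}\times\mathbb{R}^+$; constants $p_0,p_1\ge0$ with $-\varrho\le p\le\varrho+p_1$, $-p_0<p$ at all $(\varrho,n)$ with $(\varrho,n,\Pi)\in\mathcal P$ for some $\Pi$. (A2) $p$ globally Lipschitz on $\mathbb{R}\times\mathbb{R}^+$, $\partial_\varrho p\ne0$, $\partial_np\ne0$ at physical states. (A3) $\zeta,\tau_0$ smooth on $\mathbb{R}\times\mathbb{R}^+$, $\zeta\ge0$, $\tau_0>c'>0$, $\partial_\varrho(\zeta/\tau_0)$, $\partial_n(\zeta/\tau_0)$ bounded, $\partial_\varrho(\zeta/\tau_0)\ge0$. (A4) $\int_0^\infty\frac1n\sup_\varrho|\zeta/\tau_0|\,dn<\infty$. (A5) $\lambda\equiv0$, or $\lambda$ smooth positive with $p+\varrho<1/\lambda$ at physical states. *)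

theory Defs
  imports "HOL-Analysis.Analysis"
begin

text \<open>Spacetime points are pairs (t, x) with t real and x in R^3.
  Four-vectors are elements of the same type real \<times> real^3 (time component first).\<close>

type_synonym spt = "real \<times> (real^3)"

text \<open>C-infinity smoothness on a set S (derivatives taken within S, so that
  at the boundary t = 0 one-sided derivatives are used): f is continuous and
  differentiable on S and all its first partial derivatives are again smooth.\<close>

coinductive Cinf :: "'a::euclidean_space set \<Rightarrow> ('a \<Rightarrow> real) \<Rightarrow> bool" for S where
  "continuous_on S f \<Longrightarrow> f differentiable_on S \<Longrightarrow>
   (\<forall>b\<in>Basis. Cinf S (\<lambda>y. frechet_derivative f (at y within S) b)) \<Longrightarrow> Cinf S f"

definition mink :: "spt \<Rightarrow> spt \<Rightarrow> real" where
  "mink v w = - fst v * fst w + snd v \<bullet> snd w"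

definition dd :: "spt set \<Rightarrow> (spt \<Rightarrow> 'b::real_normed_vector) \<Rightarrow> spt \<Rightarrow> spt \<Rightarrow> 'b" where
  "dd S f q v = frechet_derivative f (at q within S) v"

definition divg :: "spt set \<Rightarrow> (spt \<Rightarrow> spt) \<Rightarrow> spt \<Rightarrow> real" where
  "divg S u q = (\<Sum>b\<in>Basis. dd S u q b \<bullet> b)"

definition d_rho :: "(real \<Rightarrow> real \<Rightarrow> real) \<Rightarrow> real \<Rightarrow> real \<Rightarrow> real" where
  "d_rho f r m = deriv (\<lambda>s. f s m) r"
definition d_n :: "(real \<Rightarrow> real \<Rightarrow> real) \<Rightarrow> real \<Rightarrow> real \<Rightarrow> real" where
  "d_n f r m = deriv (\<lambda>s. f r s) m"

definition cs2 :: "(real \<Rightarrow> real \<Rightarrow> real) \<Rightarrow> (real \<Rightarrow> real \<Rightarrow> real) \<Rightarrow> (real \<Rightarrow> real \<Rightarrow> real)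
    \<Rightarrow> real \<Rightarrow> real \<Rightarrow> real \<Rightarrow> real" where
  "cs2 p zeta tau0 r m Bp =
     zeta r m / (tau0 r m * (r + p r m + Bp)) + d_rho p r m + m * d_n p r m / (r + p r m + Bp)"

definition phys :: "(real \<Rightarrow> real \<Rightarrow> real) \<Rightarrow> (real \<Rightarrow> real \<Rightarrow> real) \<Rightarrow> (real \<Rightarrow> real \<Rightarrow> real)
    \<Rightarrow> real \<Rightarrow> real \<Rightarrow> real \<Rightarrow> bool" where
  "phys p zeta tau0 r m Bp \<longleftrightarrow>
     0 < r \<and> 0 < m \<and> 0 < cs2 p zeta tau0 r m Bp \<and> cs2 p zeta tau0 r m Bp < 1"

definition halfplane :: "(real \<times> real) set" where
  "halfplane = {(r, m). 0 < m}"

definition A1 :: "(real \<Rightarrow> real \<Rightarrow> real) \<Rightarrow> (real \<Rightarrow> real \<Rightarrow> real) \<Rightarrow> (real \<Rightarrow> real \<Rightarrow> real) \<Rightarrow> bool" where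
  "A1 p zeta tau0 \<longleftrightarrow>
     Cinf halfplane (\<lambda>(r, m). p r m) \<and> Cinf halfplane (\<lambda>(r, m). zeta r m) \<and>
     Cinf halfplane (\<lambda>(r, m). tau0 r m) \<and>
     (\<exists>p0 p1. 0 \<le> p0 \<and> 0 \<le> p1 \<and>
        (\<forall>r m Bp. phys p zeta tau0 r m Bp \<longrightarrow>
            - r \<le> p r m \<and> p r m \<le> r + p1 \<and> - p0 < p r m))"

definition A2 :: "(real \<Rightarrow> real \<Rightarrow> real) \<Rightarrow> (real \<Rightarrow> real \<Rightarrow> real) \<Rightarrow> (real \<Rightarrow> real \<Rightarrow> real) \<Rightarrow> bool" where
  "A2 p zeta tau0 \<longleftrightarrow>
     (\<exists>L. \<forall>r1 m1 r2 m2. 0 < m1 \<longrightarrow> 0 < m2 \<longrightarrow>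
        \<bar>p r1 m1 - p r2 m2\<bar> \<le> L * dist (r1, m1) (r2, m2)) \<and>
     (\<forall>r m Bp. phys p zeta tau0 r m Bp \<longrightarrow> d_rho p r m \<noteq> 0 \<and> d_n p r m \<noteq> 0)"

definition A3 :: "(real \<Rightarrow> real \<Rightarrow> real) \<Rightarrow> (real \<Rightarrow> real \<Rightarrow> real) \<Rightarrow> bool" where
  "A3 zeta tau0 \<longleftrightarrow>
     Cinf halfplane (\<lambda>(r, m). zeta r m) \<and> Cinf halfplane (\<lambda>(r, m). tau0 r m) \<and>
     (\<forall>r m. 0 < m \<longrightarrow> 0 \<le> zeta r m) \<and>
     (\<exists>c'. 0 < c' \<and> (\<forall>r m. 0 < m \<longrightarrow> c' < tau0 r m)) \<and>
     (\<exists>B. \<forall>r m. 0 < m \<longrightarrow>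
        \<bar>d_rho (\<lambda>s k. zeta s k / tau0 s k) r m\<bar> \<le> B \<and>
        \<bar>d_n (\<lambda>s k. zeta s k / tau0 s k) r m\<bar> \<le> B) \<and>
     (\<forall>r m. 0 < m \<longrightarrow> 0 \<le> d_rho (\<lambda>s k. zeta s k / tau0 s k) r m)"

definition A4 :: "(real \<Rightarrow> real \<Rightarrow> real) \<Rightarrow> (real \<Rightarrow> real \<Rightarrow> real) \<Rightarrow> bool" where
  "A4 zeta tau0 \<longleftrightarrow>
     (\<integral>\<^sup>+ m\<in>{0<..}. ennreal (1 / m) * (SUP r. ennreal \<bar>zeta r m / tau0 r m\<bar>) \<partial>lborel) < \<infinity>"

definition A5 :: "(real \<Rightarrow> real \<Rightarrow> real) \<Rightarrow> (real \<Rightarrow> real \<Rightarrow> real) \<Rightarrow> (real \<Rightarrow> real \<Rightarrow> real)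
    \<Rightarrow> (real \<Rightarrow> real \<Rightarrow> real) \<Rightarrow> bool" where
  "A5 p zeta tau0 lam \<longleftrightarrow>
     (\<forall>r m. 0 < m \<longrightarrow> lam r m = 0) \<or>
     (Cinf halfplane (\<lambda>(r, m). lam r m) \<and> (\<forall>r m. 0 < m \<longrightarrow> 0 < lam r m) \<and>
      (\<forall>r m Bp. phys p zeta tau0 r m Bp \<longrightarrow> p r m + r < 1 / lam r m))"

definition slab :: "real \<Rightarrow> spt set" where
  "slab T0 = {0..<T0} \<times> UNIV"

definition MIS_smooth_admissible_solution ::
  "(real \<Rightarrow> real \<Rightarrow> real) \<Rightarrow> (real \<Rightarrow> real \<Rightarrow> real) \<Rightarrow> (real \<Rightarrow> real \<Rightarrow> real) \<Rightarrow> (real \<Rightarrow> real \<Rightarrow> real)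
   \<Rightarrow> real \<Rightarrow> (spt \<Rightarrow> real) \<Rightarrow> (spt \<Rightarrow> real) \<Rightarrow> (spt \<Rightarrow> real) \<Rightarrow> (spt \<Rightarrow> spt) \<Rightarrow> bool" where
  "MIS_smooth_admissible_solution p zeta tau0 lam T0 rho nn Bp u \<longleftrightarrow>
    (let S = slab T0 in
     Cinf S rho \<and> Cinf S nn \<and> Cinf S Bp \<and> (\<forall>b\<in>Basis. Cinf S (\<lambda>q. u q \<bullet> b)) \<and>
     (\<forall>q\<in>S.
        mink (u q) (u q) = -1 \<and> 0 < fst (u q) \<and>
        phys p zeta tau0 (rho q) (nn q) (Bp q) \<and>
        dd S rho q (u q) + (rho q + p (rho q) (nn q) + Bp q) * divg S u q = 0 \<and>
        (\<forall>b\<in>Basis.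
           (rho q + p (rho q) (nn q) + Bp q) * dd S (\<lambda>y. mink (u y) b) q (u q)
           + dd S (\<lambda>y. p (rho y) (nn y) + Bp y) q b
           + mink (u q) b * dd S (\<lambda>y. p (rho y) (nn y) + Bp y) q (u q) = 0) \<and>
        dd S nn q (u q) + nn q * divg S u q = 0 \<and>
        tau0 (rho q) (nn q) * dd S Bp q (u q) + Bp q + lam (rho q) (nn q) * (Bp q)\<^sup>2
           + zeta (rho q) (nn q) * divg S u q = 0))"

end

theory Submission
  imports Defs
begin

text \<open>Suppose the enthalpy \<open>w = \<rho> + p + \<Pi>\<close> were negative at \<open>(t\<^sub>0, x\<^sub>0)\<close> and compare
  it with the barrier \<open>-\<epsilon> e\<^sup>M\<^sup>t\<close> on the backward light cone of that point. The barrier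
  lies below \<open>w\<close> on the initial slice but not at the tip, so by compactness there is an earliest
  point \<open>q\<close> of the cone where \<open>w\<close> touches it. Since \<open>u\<close> is future timelike, the backward
  integral line of \<open>u\<close> through \<open>q\<close> stays in the cone at earlier times, where \<open>w\<close> lies above
  the barrier; hence \<open>u(w + \<epsilon> e\<^sup>M\<^sup>t) \<le> 0\<close> at \<open>q\<close>. On the other hand the equations for
  \<open>\<rho>\<close>, \<open>n\<close> and \<open>\<Pi>\<close> give \<open>u(w) = (1 + c\<^sub>s\<^sup>2) b \<nabla>\<cdot>u - \<Pi> (1 + \<lambda> \<Pi>) / \<tau>\<^sub>0\<close> where
  \<open>w = -b\<close>, and \<open>\<rho> + p \<ge> 0\<close>, \<open>\<lambda> (\<rho> + p) < 1\<close>, \<open>\<tau>\<^sub>0 > c'\<close> bound this from below by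
  \<open>-(2 |\<nabla>\<cdot>u| + 1/c' + 1) b\<close> once \<open>\<epsilon>\<close> is small. Choosing \<open>M\<close> above this rate on the cone
  makes \<open>u(w + \<epsilon> e\<^sup>M\<^sup>t) > 0\<close> at \<open>q\<close>, a contradiction.\<close>

lemma Cinf_continuous_on: "Cinf S f \<Longrightarrow> continuous_on S f"
  by (erule Cinf.cases) simp

lemma Cinf_has_derivative:
  "Cinf S f \<Longrightarrow> x \<in> S \<Longrightarrow> (f has_derivative frechet_derivative f (at x within S)) (at x within S)"
  by (erule Cinf.cases) (auto simp: differentiable_on_def frechet_derivative_works)

lemma Cinf_partial_derivative:
  "Cinf S f \<Longrightarrow> b \<in> Basis \<Longrightarrow> Cinf S (\<lambda>y. frechet_derivative f (at y within S) b)"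
  by (erule Cinf.cases) auto

lemma Cinf_continuous_on_directional_derivative:
  assumes f: "Cinf S f" and v: "\<And>b. b \<in> Basis \<Longrightarrow> continuous_on S (\<lambda>x. v x \<bullet> b)"
  shows "continuous_on S (\<lambda>x. frechet_derivative f (at x within S) (v x))"
proof (rule continuous_on_eq)
  show "continuous_on S (\<lambda>x. \<Sum>b\<in>Basis. (v x \<bullet> b) * frechet_derivative f (at x within S) b)"
    using v Cinf_continuous_on[OF Cinf_partial_derivative[OF f]]
    by (intro continuous_on_sum continuous_on_mult) auto
  show "(\<Sum>b\<in>Basis. (v x \<bullet> b) * frechet_derivative f (at x within S) b)
      = frechet_derivative f (at x within S) (v x)" if "x \<in> S" for x
    using Linear_Algebra.linear_componentwise[OF has_derivative_linear[OF Cinf_has_derivative[OF f that]], of "v x" 1]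
    by simp
qed

lemma has_derivative_partials:
  fixes f :: "real \<Rightarrow> real \<Rightarrow> real"
  assumes der: "(case_prod f has_derivative f') (at (r, m))"
  shows "f' (a, b) = a * d_rho f r m + b * d_n f r m"
proof -
  interpret f': linear f' using has_derivative_linear[OF der] .
  have f'_rho: "(\<lambda>s. f' (s, 0)) = (*) (f' (1, 0))"
  proof
    show "f' (s, 0) = f' (1, 0) * s" for s using f'.scale[of s "(1, 0)"] by simp
  qed
  have f'_n: "(\<lambda>s. f' (0, s)) = (*) (f' (0, 1))"
  proof
    show "f' (0, s) = f' (0, 1) * s" for s using f'.scale[of s "(0, 1)"] by simp
  qed
  have "((\<lambda>s. (s, m)) has_derivative (\<lambda>s. (s, 0))) (at r)"
    by (auto intro!: derivative_eq_intros)
  from has_derivative_compose[OF this der]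
  have "((\<lambda>s. f s m) has_real_derivative f' (1, 0)) (at r)"
    by (simp add: has_field_derivative_def f'_rho)
  then have d_rho: "d_rho f r m = f' (1, 0)"
    unfolding d_rho_def by (rule DERIV_imp_deriv)
  have "((\<lambda>s. (r, s)) has_derivative (\<lambda>s. (0, s))) (at m)"
    by (auto intro!: derivative_eq_intros)
  from has_derivative_compose[OF this der]
  have "((\<lambda>s. f r s) has_real_derivative f' (0, 1)) (at m)"
    by (simp add: has_field_derivative_def f'_n)
  then have d_n: "d_n f r m = f' (0, 1)"
    unfolding d_n_def by (rule DERIV_imp_deriv)
  have "f' (a, b) = f' (a, 0) + f' (0, b)" using f'.add[of "(a, 0)" "(0, b)"] by simp
  then show ?thesis
    using fun_cong[OF f'_rho, of a] fun_cong[OF f'_n, of b] d_rho d_n by (simp add: mult.commute)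
qed

lemma has_derivative_compose_partials:
  fixes f :: "real \<Rightarrow> real \<Rightarrow> real"
  assumes f: "case_prod f differentiable (at (R x, N x))"
    and R: "(R has_derivative R') (at x within S)" and N: "(N has_derivative N') (at x within S)"
  shows "((\<lambda>y. f (R y) (N y)) has_derivative
           (\<lambda>z. R' z * d_rho f (R x) (N x) + N' z * d_n f (R x) (N x))) (at x within S)"
proof -
  obtain f' where f': "(case_prod f has_derivative f') (at (R x, N x))"
    using f by (auto simp: differentiable_def)
  have "((\<lambda>y. case_prod f (R y, N y)) has_derivative (\<lambda>z. f' (R' z, N' z))) (at x within S)"
    using has_derivative_compose[OF has_derivative_Pair[OF R N] f'] by simp
  then show ?thesis
    by (simp add: has_derivative_partials[OF f'] mult.commute)
qed

lemma open_halfplane: "open halfplane"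
proof -
  have "halfplane = {z. 0 < snd z}" by (auto simp: halfplane_def)
  moreover have "open {z :: real \<times> real. 0 < snd z}" by (intro open_Collect_less continuous_intros)
  ultimately show ?thesis by simp
qed

lemma Cinf_halfplane_differentiable:
  assumes "Cinf halfplane f" and "0 < m"
  shows "f differentiable (at (r, m))"
proof -
  have rm: "(r, m) \<in> halfplane" using \<open>0 < m\<close> by (simp add: halfplane_def)
  show ?thesis
    using Cinf_has_derivative[OF assms(1) rm] at_within_open[OF rm open_halfplane]
    by (auto simp: differentiable_def)
qed

lemma future_unit_timelike_bounds:
  assumes "mink v v = -1" and "0 < fst v"
  shows "1 \<le> fst v" and "norm (snd v) \<le> fst v"
proof -
  have norm_sq: "(norm (snd v))\<^sup>2 = (fst v)\<^sup>2 - 1"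
    using assms(1) unfolding mink_def power2_norm_eq_inner by (simp add: power2_eq_square)
  then have "1 \<le> (fst v)\<^sup>2" using zero_le_power2[of "norm (snd v)"] by linarith
  then show "1 \<le> fst v"
    using power2_le_imp_le[of 1 "fst v"] assms(2) by simp
  show "norm (snd v) \<le> fst v"
    using norm_sq power2_le_imp_le[of "norm (snd v)" "fst v"] assms(2) by simp
qed

definition past_cone :: "real \<Rightarrow> 'a::real_normed_vector \<Rightarrow> (real \<times> 'a) set" where
  "past_cone t x = {q. 0 \<le> fst q \<and> norm (snd q - x) + fst q \<le> t}"

lemma past_cone_time_le:
  assumes "q \<in> past_cone t x"
  shows "0 \<le> fst q \<and> fst q \<le> t"
proof -
  have "0 \<le> fst q" "norm (snd q - x) + fst q \<le> t"
    using assms by (simp_all add: past_cone_def)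
  then show ?thesis using norm_ge_zero[of "snd q - x"] by linarith
qed

lemma compact_past_cone: "compact (past_cone t (x :: 'a::{real_normed_vector, heine_borel}))"
proof -
  have "past_cone t x \<subseteq> {0..t} \<times> cball x t"
  proof
    fix q assume q: "q \<in> past_cone t x"
    then have "norm (snd q - x) \<le> t" by (simp add: past_cone_def)
    with past_cone_time_le[OF q] show "q \<in> {0..t} \<times> cball x t"
      by (cases q) (simp add: dist_norm norm_minus_commute)
  qed
  moreover have "closed (past_cone t x)"
    unfolding past_cone_def by (intro closed_Collect_conj closed_Collect_le continuous_intros)
  ultimately show ?thesis
    by (metis compact_Icc compact_Times compact_cball compact_Int_closed inf.absorb2)
qed

lemma past_cone_backward_segment:
  assumes q: "q \<in> past_cone t x" and v: "norm (snd v) \<le> fst v"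
    and s: "0 \<le> s" "s * fst v \<le> fst q"
  shows "q - s *\<^sub>R v \<in> past_cone t x"
proof -
  have "norm (snd q - s *\<^sub>R snd v - x) \<le> norm (snd q - x) + s * norm (snd v)"
    using norm_triangle_ineq4[of "snd q - x" "s *\<^sub>R snd v"] s(1) by (simp add: algebra_simps)
  also have "\<dots> \<le> norm (snd q - x) + s * fst v"
    using v s(1) by (simp add: mult_left_mono)
  finally show ?thesis using q s unfolding past_cone_def by auto
qed

lemma has_derivative_nonpos_of_backward_min:
  fixes h :: "'a::real_normed_vector \<Rightarrow> real"
  assumes der: "(h has_derivative h') (at q within S)" and "0 < \<delta>"
    and seg: "\<And>s. s \<in> {0..\<delta>} \<Longrightarrow> q - s *\<^sub>R v \<in> S"
    and min: "\<And>s. s \<in> {0<..\<delta>} \<Longrightarrow> h q \<le> h (q - s *\<^sub>R v)"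
  shows "h' v \<le> 0"
proof (rule ccontr)
  assume "\<not> h' v \<le> 0"
  interpret h': linear h' using has_derivative_linear[OF der] .
  have line: "((\<lambda>s. q - s *\<^sub>R v) has_derivative (\<lambda>s. - (s *\<^sub>R v))) (at 0 within {0..\<delta>})"
    by (auto intro!: derivative_eq_intros)
  have "(h has_derivative h') (at q within (\<lambda>s. q - s *\<^sub>R v) ` {0..\<delta>})"
    using seg by (intro has_derivative_subset[OF der]) auto
  then have "((\<lambda>s. h (q - s *\<^sub>R v)) has_derivative (\<lambda>s. h' (- (s *\<^sub>R v)))) (at 0 within {0..\<delta>})"
    using diff_chain_within[OF line, of h h'] by (simp add: o_def)
  moreover have "(\<lambda>s. h' (- (s *\<^sub>R v))) = (*) (- h' v)"
    by (auto simp: h'.neg h'.scale)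
  ultimately have "((\<lambda>s. h (q - s *\<^sub>R v)) has_real_derivative - h' v) (at 0 within {0..\<delta>})"
    by (simp add: has_field_derivative_def)
  from has_real_derivative_neg_dec_right[OF this] obtain d where "0 < d"
    and dec: "\<forall>s>0. 0 + s \<in> {0..\<delta>} \<longrightarrow> s < d \<longrightarrow> h (q - (0 + s) *\<^sub>R v) < h (q - 0 *\<^sub>R v)"
    using \<open>\<not> h' v \<le> 0\<close> by auto
  define s where "s = min (d / 2) \<delta>"
  have "0 < s" "s \<in> {0..\<delta>}" "s < d" using \<open>0 < d\<close> \<open>0 < \<delta>\<close> by (auto simp: s_def)
  with dec min[of s] show False by auto
qed

lemma first_zero_along_backward_flow:
  fixes h t :: "'a::real_normed_vector \<Rightarrow> real" and v :: "'a \<Rightarrow> 'a"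
  assumes K: "compact K" and h: "continuous_on K h" and t: "continuous_on K t"
    and q0: "q0 \<in> K" "h q0 \<le> 0"
    and init: "\<And>q. q \<in> K \<Longrightarrow> t q \<le> 0 \<Longrightarrow> 0 < h q"
    and flow: "\<And>q. q \<in> K \<Longrightarrow> 0 < t q \<Longrightarrow> \<exists>\<delta>>0. \<forall>s\<in>{0..\<delta>}.
                 q - s *\<^sub>R v q \<in> K \<and> (0 < s \<longrightarrow> t (q - s *\<^sub>R v q) < t q)"
  obtains q \<delta> where "q \<in> K" "h q = 0" "0 < \<delta>"
    "\<And>s. s \<in> {0..\<delta>} \<Longrightarrow> q - s *\<^sub>R v q \<in> K"
    "\<And>s. s \<in> {0<..\<delta>} \<Longrightarrow> 0 < h (q - s *\<^sub>R v q)"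
proof -
  define Z where "Z = K \<inter> h -` {..0}"
  have "closed Z"
    unfolding Z_def using h compact_imp_closed[OF K] by (rule continuous_closed_preimage) auto
  then have "compact (K \<inter> Z)" using K by (intro compact_Int_closed)
  moreover have "K \<inter> Z = Z" by (auto simp: Z_def)
  ultimately have "compact Z" by simp
  moreover have "Z \<noteq> {}" using q0 by (auto simp: Z_def)
  moreover have "continuous_on Z t" using t by (rule continuous_on_subset) (auto simp: Z_def)
  ultimately obtain q where qZ: "q \<in> Z" and earliest: "\<And>y. y \<in> Z \<Longrightarrow> t q \<le> t y"
    using continuous_attains_inf[of Z t] by blast
  then have qK: "q \<in> K" and "h q \<le> 0" by (auto simp: Z_def)
  then have "0 < t q" using init[OF qK] by (cases "t q \<le> 0") auto
  then obtain \<delta> where "0 < \<delta>" and seg: "\<And>s. s \<in> {0..\<delta>} \<Longrightarrow> q - s *\<^sub>R v q \<in> K"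
    and earlier: "\<And>s. s \<in> {0<..\<delta>} \<Longrightarrow> t (q - s *\<^sub>R v q) < t q"
    using flow[OF qK] by fastforce
  have pos: "0 < h (q - s *\<^sub>R v q)" if "s \<in> {0<..\<delta>}" for s
  proof (rule ccontr)
    assume "\<not> 0 < h (q - s *\<^sub>R v q)"
    then have "q - s *\<^sub>R v q \<in> Z" using seg[of s] that by (auto simp: Z_def)
    with earliest earlier[OF that] show False by fastforce
  qed
  have "continuous_on {0..\<delta>} (\<lambda>s. h (q - s *\<^sub>R v q))"
    by (intro continuous_on_compose2[OF h] continuous_intros) (use seg in auto)
  then obtain s where "s \<in> {0..\<delta>}" "h (q - s *\<^sub>R v q) = 0"
    using IVT'[of "\<lambda>s. h (q - s *\<^sub>R v q)" 0 0 \<delta>] \<open>h q \<le> 0\<close> pos[of \<delta>] \<open>0 < \<delta>\<close> by auto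
  then have "h q = 0" using pos[of s] by (cases "s = 0") auto
  with that qK \<open>0 < \<delta>\<close> seg pos show ?thesis by blast
qed

text \<open>The derivatives of \<open>\<rho>\<close>, \<open>n\<close>, \<open>\<Pi>\<close> along \<open>u\<close> are \<open>Dr\<close>, \<open>Dn\<close>, \<open>DB\<close>; \<open>Pr\<close>, \<open>Pn\<close> are
  the partial derivatives of \<open>p\<close>, \<open>dv\<close> is \<open>\<nabla>\<cdot>u\<close>, \<open>w\<close> is \<open>\<rho> + p + \<Pi>\<close> and \<open>a\<close> is \<open>\<rho> + p\<close>.\<close>

lemma enthalpy_transport_lower_bound:
  fixes Dr Dn DB Pr Pn dv w m B a b lam zeta tau c :: real
  assumes rho_eq: "Dr + w * dv = 0" and n_eq: "Dn + m * dv = 0"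
    and Bp_eq: "tau * DB + B + lam * B\<^sup>2 + zeta * dv = 0"
    and cs: "0 < zeta / (tau * w) + Pr + m * Pn / w" "zeta / (tau * w) + Pr + m * Pn / w < 1"
    and w: "w = - b" "0 < b" and B: "B = w - a" "0 \<le> a"
    and lam: "0 \<le> lam" "lam * a < 1" "lam * b < c"
    and tau: "c < tau" "0 < c"
  shows "- (2 * \<bar>dv\<bar> + 1 / c + 1) * b < Dr + Dr * Pr + Dn * Pn + DB"
proof -
  define cs where "cs = zeta / (tau * w) + Pr + m * Pn / w"
  define X where "X = - B * (1 + lam * B)"
  have "0 < tau" using tau by linarith
  have transport: "Dr + Dr * Pr + Dn * Pn + DB = (1 + cs) * b * dv + X / tau"
  proof -
    have "X / tau = DB + zeta * dv / tau"
      using Bp_eq \<open>0 < tau\<close> unfolding X_def by (simp add: field_simps power2_eq_square)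
    moreover have "cs * b = - zeta / tau + Pr * b - m * Pn"
      unfolding cs_def using w \<open>0 < tau\<close> by (simp add: field_simps)
    then have "(1 + cs) * b * dv = b * dv + (- zeta / tau + Pr * b - m * Pn) * dv"
      by (metis distrib_right mult_1)
    moreover have "Dr = b * dv" "Dn = - m * dv" using rho_eq n_eq w by auto
    ultimately show ?thesis by (simp add: algebra_simps)
  qed
  have "\<bar>(1 + cs) * b * dv\<bar> \<le> 2 * \<bar>dv\<bar> * b"
    using cs w(2) unfolding cs_def[symmetric] by (simp add: abs_mult mult_right_mono)
  then have flux: "- (2 * \<bar>dv\<bar>) * b \<le> (1 + cs) * b * dv" by (simp add: abs_le_iff)
  have "X = a * (1 - lam * a) + b * (1 - 2 * lam * a) - lam * b\<^sup>2"
    unfolding X_def B w by (simp add: algebra_simps power2_eq_square)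
  moreover have "0 \<le> a * (1 - lam * a)" using B(2) lam(2) by simp
  moreover have "- b \<le> b * (1 - 2 * lam * a)" using w(2) lam(2) by (simp add: algebra_simps)
  ultimately have "- (b + lam * b\<^sup>2) \<le> X" by linarith
  then have source: "- (b + lam * b\<^sup>2) / c \<le> X / tau"
  proof (cases "0 \<le> X")
    case True
    then have "0 \<le> X / tau" using \<open>0 < tau\<close> by simp
    moreover have "- (b + lam * b\<^sup>2) / c \<le> 0"
      using w(2) tau(2) mult_nonneg_nonneg[OF lam(1) zero_le_power2[of b]]
      by (intro divide_nonpos_pos) linarith+
    ultimately show ?thesis by linarith
  next
    case False
    then have "X / c \<le> X / tau" using tau by (simp add: divide_left_mono_neg)
    moreover have "- (b + lam * b\<^sup>2) / c \<le> X / c" using \<open>- (b + lam * b\<^sup>2) \<le> X\<close> tau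
      by (simp add: divide_right_mono)
    ultimately show ?thesis by linarith
  qed
  have "lam * b\<^sup>2 / c < b"
    using lam(3) w(2) tau(2) by (simp add: power2_eq_square pos_divide_less_eq)
  then have "- (1 / c + 1) * b < - (b + lam * b\<^sup>2) / c"
    by (simp add: diff_divide_distrib algebra_simps)
  with transport flux source show ?thesis by (simp add: algebra_simps)
qed

lemma continuous_on_compact_bound:
  fixes f :: "'a::topological_space \<Rightarrow> real"
  assumes "continuous_on S f" and "compact K" and "K \<subseteq> S"
  obtains B where "0 < B" "\<And>q. q \<in> K \<Longrightarrow> \<bar>f q\<bar> \<le> B"
  using compact_imp_bounded[OF compact_continuous_image[OF continuous_on_subset[OF assms(1,3)] assms(2)]]
  by (force simp: bounded_pos)

lemma past_cone_subset_slab: "t < T0 \<Longrightarrow> past_cone t x \<subseteq> slab T0"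
  using past_cone_time_le by (fastforce simp: slab_def mem_Times_iff)

locale MIS_solution =
  fixes p zeta tau0 lam :: "real \<Rightarrow> real \<Rightarrow> real" and T0 :: real
    and rho nn Bp :: "spt \<Rightarrow> real" and u :: "spt \<Rightarrow> spt"
  assumes A1: "A1 p zeta tau0" and A3: "A3 zeta tau0" and A5: "A5 p zeta tau0 lam"
    and solution: "MIS_smooth_admissible_solution p zeta tau0 lam T0 rho nn Bp u"
begin

definition enthalpy :: "spt \<Rightarrow> real" where
  "enthalpy q = rho q + p (rho q) (nn q) + Bp q"

definition enthalpy_deriv :: "spt \<Rightarrow> spt \<Rightarrow> real" where
  "enthalpy_deriv q z =
     dd (slab T0) rho q z + dd (slab T0) rho q z * d_rho p (rho q) (nn q)
     + dd (slab T0) nn q z * d_n p (rho q) (nn q) + dd (slab T0) Bp q z"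

lemma solution_smooth:
  "Cinf (slab T0) rho" "Cinf (slab T0) nn" "Cinf (slab T0) Bp"
  "\<And>b. b \<in> Basis \<Longrightarrow> Cinf (slab T0) (\<lambda>q. u q \<bullet> b)"
  using solution by (auto simp: MIS_smooth_admissible_solution_def Let_def)

lemma solution_at:
  assumes "q \<in> slab T0"
  shows "mink (u q) (u q) = -1" "0 < fst (u q)" "phys p zeta tau0 (rho q) (nn q) (Bp q)"
    "dd (slab T0) rho q (u q) + enthalpy q * divg (slab T0) u q = 0"
    "dd (slab T0) nn q (u q) + nn q * divg (slab T0) u q = 0"
    "tau0 (rho q) (nn q) * dd (slab T0) Bp q (u q) + Bp q + lam (rho q) (nn q) * (Bp q)\<^sup>2
       + zeta (rho q) (nn q) * divg (slab T0) u q = 0"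
  using solution assms by (auto simp: MIS_smooth_admissible_solution_def Let_def enthalpy_def)

lemma nn_pos: "q \<in> slab T0 \<Longrightarrow> 0 < nn q"
  using solution_at(3) by (simp add: phys_def)

lemma u_timelike_bounds: "q \<in> slab T0 \<Longrightarrow> 1 \<le> fst (u q) \<and> norm (snd (u q)) \<le> fst (u q)"
  using future_unit_timelike_bounds solution_at(1,2) by blast

lemma lam_bounds:
  assumes "q \<in> slab T0"
  shows "0 \<le> lam (rho q) (nn q) \<and> lam (rho q) (nn q) * (rho q + p (rho q) (nn q)) < 1"
proof (cases "\<forall>r m. 0 < m \<longrightarrow> lam r m = 0")
  case True
  then show ?thesis using nn_pos[OF assms] by simp
next
  case False
  then have "(\<forall>r m. 0 < m \<longrightarrow> 0 < lam r m) \<and>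
      (\<forall>r m B. phys p zeta tau0 r m B \<longrightarrow> p r m + r < 1 / lam r m)"
    using A5 unfolding A5_def by blast
  then have "0 < lam (rho q) (nn q)" "p (rho q) (nn q) + rho q < 1 / lam (rho q) (nn q)"
    using nn_pos[OF assms] solution_at(3)[OF assms] by blast+
  then show ?thesis by (simp add: less_divide_eq mult.commute add.commute)
qed

lemma continuous_on_state_function:
  assumes "continuous_on halfplane (case_prod f)"
  shows "continuous_on (slab T0) (\<lambda>q. f (rho q) (nn q))"
proof -
  have "continuous_on (slab T0) (\<lambda>q. (rho q, nn q))"
    using solution_smooth(1,2) by (intro continuous_on_Pair Cinf_continuous_on)
  moreover have "(\<lambda>q. (rho q, nn q)) ` slab T0 \<subseteq> halfplane"
    using nn_pos by (auto simp: halfplane_def)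
  ultimately show ?thesis using continuous_on_compose2[OF assms] by fastforce
qed

lemma continuous_on_enthalpy: "continuous_on (slab T0) enthalpy"
proof -
  have "continuous_on (slab T0) (\<lambda>q. p (rho q) (nn q))"
    using A1 by (intro continuous_on_state_function Cinf_continuous_on) (auto simp: A1_def)
  then show ?thesis
    unfolding enthalpy_def[abs_def]
    using Cinf_continuous_on[OF solution_smooth(1)] Cinf_continuous_on[OF solution_smooth(3)]
    by (intro continuous_on_add)
qed

lemma continuous_on_lam: "continuous_on (slab T0) (\<lambda>q. lam (rho q) (nn q))"
proof (cases "\<forall>r m. 0 < m \<longrightarrow> lam r m = 0")
  case True
  then show ?thesis using nn_pos by (intro continuous_on_eq[OF continuous_on_const]) auto
next
  case False
  then show ?thesis
    using A5 by (intro continuous_on_state_function Cinf_continuous_on) (auto simp: A5_def)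
qed

text \<open>The particle-number equation expresses the divergence through a derivative of the smooth
  density \<open>n\<close>, which avoids differentiating \<open>u\<close>.\<close>

lemma continuous_on_divg: "continuous_on (slab T0) (divg (slab T0) u)"
proof (rule continuous_on_eq)
  show "continuous_on (slab T0) (\<lambda>q. - frechet_derivative nn (at q within slab T0) (u q) / nn q)"
    using Cinf_continuous_on_directional_derivative[OF solution_smooth(2)
        Cinf_continuous_on[OF solution_smooth(4)]] Cinf_continuous_on[OF solution_smooth(2)] nn_pos
    by (intro continuous_on_divide continuous_on_minus) force+
  show "- frechet_derivative nn (at q within slab T0) (u q) / nn q = divg (slab T0) u q"
    if "q \<in> slab T0" for q
    using solution_at(5)[OF that] nn_pos[OF that] by (simp add: dd_def field_simps)
qed

lemma enthalpy_has_derivative: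
  assumes "q \<in> slab T0"
  shows "(enthalpy has_derivative enthalpy_deriv q) (at q within slab T0)"
proof -
  have "case_prod p differentiable (at (rho q, nn q))"
    using A1 nn_pos[OF assms] by (intro Cinf_halfplane_differentiable) (auto simp: A1_def)
  then have "((\<lambda>y. p (rho y) (nn y)) has_derivative
      (\<lambda>z. dd (slab T0) rho q z * d_rho p (rho q) (nn q) + dd (slab T0) nn q z * d_n p (rho q) (nn q)))
      (at q within slab T0)"
    unfolding dd_def
    by (intro has_derivative_compose_partials Cinf_has_derivative solution_smooth assms)
  then show ?thesis
    unfolding enthalpy_def[abs_def] enthalpy_deriv_def[abs_def] dd_def
    using Cinf_has_derivative[OF solution_smooth(1) assms]
      Cinf_has_derivative[OF solution_smooth(3) assms]
    by (auto intro!: derivative_eq_intros simp: algebra_simps)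
qed

lemma enthalpy_deriv_lower_bound:
  assumes q: "q \<in> slab T0" and b: "enthalpy q = - b" "0 < b"
    and c: "0 < c" "\<And>r m. 0 < m \<Longrightarrow> c < tau0 r m" and lam: "lam (rho q) (nn q) * b < c"
  shows "- (2 * \<bar>divg (slab T0) u q\<bar> + 1 / c + 1) * b < enthalpy_deriv q (u q)"
  unfolding enthalpy_deriv_def
proof (rule enthalpy_transport_lower_bound)
  show "dd (slab T0) rho q (u q) + enthalpy q * divg (slab T0) u q = 0"
    "dd (slab T0) nn q (u q) + nn q * divg (slab T0) u q = 0"
    "tau0 (rho q) (nn q) * dd (slab T0) Bp q (u q) + Bp q + lam (rho q) (nn q) * (Bp q)\<^sup>2
       + zeta (rho q) (nn q) * divg (slab T0) u q = 0"
    using solution_at[OF q] by auto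
  show "0 < zeta (rho q) (nn q) / (tau0 (rho q) (nn q) * enthalpy q)
          + d_rho p (rho q) (nn q) + nn q * d_n p (rho q) (nn q) / enthalpy q"
    "zeta (rho q) (nn q) / (tau0 (rho q) (nn q) * enthalpy q)
          + d_rho p (rho q) (nn q) + nn q * d_n p (rho q) (nn q) / enthalpy q < 1"
    using solution_at(3)[OF q] by (simp_all add: phys_def cs2_def enthalpy_def)
  show "Bp q = enthalpy q - (rho q + p (rho q) (nn q))" by (simp add: enthalpy_def)
  show "0 \<le> rho q + p (rho q) (nn q)"
    using A1 solution_at(3)[OF q] by (force simp: A1_def)
  show "0 \<le> lam (rho q) (nn q)" "lam (rho q) (nn q) * (rho q + p (rho q) (nn q)) < 1"
    using lam_bounds[OF q] by auto
  show "c < tau0 (rho q) (nn q)" using c(2) nn_pos[OF q] .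
qed (use b c lam in auto)

lemma past_cone_backward_flow:
  assumes q: "q \<in> past_cone t x" "0 < fst q" and "t < T0"
  shows "\<exists>\<delta>>0. \<forall>s\<in>{0..\<delta>}. q - s *\<^sub>R u q \<in> past_cone t x \<and> (0 < s \<longrightarrow> fst (q - s *\<^sub>R u q) < fst q)"
proof -
  have u: "1 \<le> fst (u q)" "norm (snd (u q)) \<le> fst (u q)"
    using u_timelike_bounds past_cone_subset_slab[OF \<open>t < T0\<close>] q(1) by blast+
  have "q - s *\<^sub>R u q \<in> past_cone t x \<and> (0 < s \<longrightarrow> fst (q - s *\<^sub>R u q) < fst q)"
    if "s \<in> {0..fst q / fst (u q)}" for s
  proof -
    have "0 \<le> s" "s * fst (u q) \<le> fst q" using that u by (auto simp: le_divide_eq)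
    then show ?thesis using past_cone_backward_segment[OF q(1) u(2)] u(1) by auto
  qed
  moreover have "0 < fst q / fst (u q)" using q(2) u(1) by simp
  ultimately show ?thesis by blast
qed

lemma first_contact_with_barrier:
  assumes init: "\<And>x. 0 \<le> enthalpy (0, x)" and t0: "0 \<le> t0" "t0 < T0"
    and tip: "enthalpy (t0, x0) + \<epsilon> * exp (M * t0) \<le> 0" and "0 < \<epsilon>"
  obtains q \<delta> where "q \<in> past_cone t0 x0" "enthalpy q + \<epsilon> * exp (M * fst q) = 0" "0 < \<delta>"
    "\<And>s. s \<in> {0..\<delta>} \<Longrightarrow> q - s *\<^sub>R u q \<in> past_cone t0 x0"
    "\<And>s. s \<in> {0<..\<delta>} \<Longrightarrow> 0 < enthalpy (q - s *\<^sub>R u q) + \<epsilon> * exp (M * fst (q - s *\<^sub>R u q))"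
proof (rule first_zero_along_backward_flow[where t = fst and v = u])
  show "continuous_on (past_cone t0 x0) (\<lambda>q. enthalpy q + \<epsilon> * exp (M * fst q))"
    using continuous_on_subset[OF continuous_on_enthalpy past_cone_subset_slab[OF t0(2)]]
    by (intro continuous_intros)
  show "(t0, x0) \<in> past_cone t0 x0" using t0(1) by (simp add: past_cone_def)
  show "0 < enthalpy q + \<epsilon> * exp (M * fst q)" if "q \<in> past_cone t0 x0" "fst q \<le> 0" for q
  proof -
    have "fst q = 0" using past_cone_time_le[OF that(1)] that(2) by simp
    then have "enthalpy q = enthalpy (0, snd q)" by (metis prod.collapse)
    then show ?thesis using init[of "snd q"] \<open>0 < \<epsilon>\<close> \<open>fst q = 0\<close> by simp
  qed
  show "\<exists>\<delta>>0. \<forall>s\<in>{0..\<delta>}. q - s *\<^sub>R u q \<in> past_cone t0 x0 \<and> (0 < s \<longrightarrow> fst (q - s *\<^sub>R u q) < fst q)"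
    if "q \<in> past_cone t0 x0" "0 < fst q" for q
    using past_cone_backward_flow that t0(2) by simp
qed (use tip compact_past_cone in \<open>auto intro: continuous_on_fst continuous_on_id\<close>)

lemma barrier_has_derivative:
  assumes "q \<in> slab T0"
  shows "((\<lambda>y. enthalpy y + \<epsilon> * exp (M * fst y)) has_derivative
           (\<lambda>z. enthalpy_deriv q z + \<epsilon> * exp (M * fst q) * M * fst z)) (at q within slab T0)"
  using enthalpy_has_derivative[OF assms] by (auto intro!: derivative_eq_intros simp: algebra_simps)

lemma barrier_crossed_upwards:
  assumes q: "q \<in> slab T0" and b: "enthalpy q = - b" "0 < b"
    and c: "0 < c" "\<And>r m. 0 < m \<Longrightarrow> c < tau0 r m" "lam (rho q) (nn q) * b < c"
    and M: "2 * \<bar>divg (slab T0) u q\<bar> + 1 / c + 1 \<le> M"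
  shows "0 < enthalpy_deriv q (u q) + b * M * fst (u q)"
proof -
  have "0 < 1 / c" using c(1) by simp
  then have "0 < M" using M abs_ge_zero[of "divg (slab T0) u q"] by linarith
  then have "b * M \<le> b * M * fst (u q)"
    using u_timelike_bounds[OF q] mult_left_mono[of 1 "fst (u q)" "b * M"] b(2) by simp
  moreover have "(2 * \<bar>divg (slab T0) u q\<bar> + 1 / c + 1) * b \<le> b * M"
    using mult_right_mono[OF M, of b] b(2) by (simp add: mult.commute)
  ultimately show ?thesis using enthalpy_deriv_lower_bound[OF q b c] by linarith
qed

lemma enthalpy_nonneg:
  assumes init: "\<And>x. 0 \<le> enthalpy (0, x)" and t0: "0 \<le> t0" "t0 < T0"
  shows "0 \<le> enthalpy (t0, x0)"
proof (rule ccontr)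
  assume "\<not> 0 \<le> enthalpy (t0, x0)"
  have cone: "compact (past_cone t0 x0)" "past_cone t0 x0 \<subseteq> slab T0"
    using compact_past_cone past_cone_subset_slab[OF t0(2)] by auto
  obtain c where c: "0 < c" "\<And>r m. 0 < m \<Longrightarrow> c < tau0 r m"
    using A3 unfolding A3_def by blast
  obtain D where D: "0 < D" "\<And>q. q \<in> past_cone t0 x0 \<Longrightarrow> \<bar>divg (slab T0) u q\<bar> \<le> D"
    using continuous_on_compact_bound[OF continuous_on_divg cone] by blast
  obtain L where L: "0 < L" "\<And>q. q \<in> past_cone t0 x0 \<Longrightarrow> \<bar>lam (rho q) (nn q)\<bar> \<le> L"
    using continuous_on_compact_bound[OF continuous_on_lam cone] by blast
  define M where "M = 2 * D + 1 / c + 1"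
  define \<epsilon> where "\<epsilon> = min (- enthalpy (t0, x0)) (c / (2 * L)) / exp (M * t0)"
  have "0 < \<epsilon>" using \<open>\<not> 0 \<le> enthalpy (t0, x0)\<close> c(1) L(1) by (simp add: \<epsilon>_def)
  have small: "\<epsilon> * exp (M * fst q) \<le> min (- enthalpy (t0, x0)) (c / (2 * L))"
    if "q \<in> past_cone t0 x0" for q
  proof -
    have "M * fst q \<le> M * t0"
      using past_cone_time_le[of q] that D(1) c(1) by (simp add: M_def mult_left_mono)
    then have "\<epsilon> * exp (M * fst q) \<le> \<epsilon> * exp (M * t0)" using \<open>0 < \<epsilon>\<close> by simp
    also have "\<dots> = min (- enthalpy (t0, x0)) (c / (2 * L))" by (simp add: \<epsilon>_def)
    finally show ?thesis .
  qed
  have "enthalpy (t0, x0) + \<epsilon> * exp (M * t0) \<le> 0"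
    using small[of "(t0, x0)"] t0(1) by (simp add: past_cone_def)
  then obtain q \<delta> where q: "q \<in> past_cone t0 x0" "enthalpy q + \<epsilon> * exp (M * fst q) = 0"
    and "0 < \<delta>" and seg: "\<And>s. s \<in> {0..\<delta>} \<Longrightarrow> q - s *\<^sub>R u q \<in> past_cone t0 x0"
    and above: "\<And>s. s \<in> {0<..\<delta>} \<Longrightarrow>
                  0 < enthalpy (q - s *\<^sub>R u q) + \<epsilon> * exp (M * fst (q - s *\<^sub>R u q))"
    by (rule first_contact_with_barrier[OF init t0 _ \<open>0 < \<epsilon>\<close>]) (rule that)
  have qS: "q \<in> slab T0" using q(1) cone(2) by blast
  define b where "b = \<epsilon> * exp (M * fst q)"
  have "enthalpy_deriv q (u q) + b * M * fst (u q) \<le> 0"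
    unfolding b_def
  proof (rule has_derivative_nonpos_of_backward_min[OF barrier_has_derivative[OF qS] \<open>0 < \<delta>\<close>])
    show "q - s *\<^sub>R u q \<in> slab T0" if "s \<in> {0..\<delta>}" for s using seg[OF that] cone(2) by blast
  qed (use above q(2) in \<open>simp add: less_imp_le\<close>)
  moreover have "0 < enthalpy_deriv q (u q) + b * M * fst (u q)"
  proof (rule barrier_crossed_upwards[OF qS _ _ c])
    have "lam (rho q) (nn q) * b \<le> L * b"
      using abs_le_D1[OF L(2)[OF q(1)]] \<open>0 < \<epsilon>\<close> by (simp add: b_def)
    also have "\<dots> \<le> c / 2" using small[OF q(1)] L(1) by (simp add: b_def field_simps)
    finally show "lam (rho q) (nn q) * b < c" using c(1) by linarith
    show "2 * \<bar>divg (slab T0) u q\<bar> + 1 / c + 1 \<le> M" using D(2)[OF q(1)] by (simp add: M_def)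
  qed (use q(2) \<open>0 < \<epsilon>\<close> in \<open>auto simp: b_def\<close>)
  ultimately show False by linarith
qed

end

theorem mainTheorem6:
  fixes p zeta tau0 lam :: "real \<Rightarrow> real \<Rightarrow> real"
    and T0 :: real
    and rho nn Bp :: "real \<times> (real^3) \<Rightarrow> real"
    and u :: "real \<times> (real^3) \<Rightarrow> real \<times> (real^3)"
    and rho0 n0 Bp0 :: "real^3 \<Rightarrow> real"
    and u0 :: "real^3 \<Rightarrow> real \<times> (real^3)"
  assumes "A1 p zeta tau0" and "A2 p zeta tau0" and "A3 zeta tau0" and "A4 zeta tau0"
    and "A5 p zeta tau0 lam"
    and "MIS_smooth_admissible_solution p zeta tau0 lam T0 rho nn Bp u"
    and "\<forall>x. rho (0, x) = rho0 x \<and> nn (0, x) = n0 x \<and> Bp (0, x) = Bp0 x \<and> u (0, x) = u0 x"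
    and "\<forall>x. 0 \<le> rho0 x + p (rho0 x) (n0 x) + Bp0 x"
  shows "\<forall>t x. 0 \<le> t \<and> t < T0 \<longrightarrow> 0 \<le> rho (t, x) + p (rho (t, x)) (nn (t, x)) + Bp (t, x)"
proof -
  interpret MIS_solution p zeta tau0 lam T0 rho nn Bp u
    using assms(1,3,5,6) by unfold_locales
  have "0 \<le> enthalpy (0, x)" for x
    using assms(7,8) by (simp add: enthalpy_def)
  then show ?thesis
    using enthalpy_nonneg by (simp add: enthalpy_def)
qed

end
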